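(* For $q\ge1$, the generating function $F_q(x)=\sum_{n\ge0}f_nx^n$, where $f_n$ is the number of $q$-decreasing binary words of length $n$, is $$F_q(x)=\frac{1-x^{q+1}}{1-2x+x^{q+2}}.$$
   Context: For $q\ge1$, a binary word is $q$-decreasing if for every maximal run of $0$s, of length $a>0$, together with the (possibly empty) maximal run of $1$s immediately following it, of length $b$, one has $q\cdot a>b$. The empty word is the unique word of length $0$. *)

theory Defs
  imports "HOL-Computational_Algebra.Formal_Power_Series"
begin

text \<open>A maximal run of 0s starts at position i iff w!i = 0 and (i = 0 or w!(i-1) = 1).
  Its length a is the length of the longest prefix of 0s of drop i w; the maximal
  run of 1s immediately following it (possibly empty) has length b, the longest
  prefix of 1s of drop (i+a) w.\<close>

definition q_decreasing :: "nat \<Rightarrow> nat list \<Rightarrow> bool" where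
  "q_decreasing q w \<longleftrightarrow>
     (\<forall>i < length w. w ! i = 0 \<and> (i = 0 \<or> w ! (i - 1) = 1) \<longrightarrow>
        (let a = length (takeWhile (\<lambda>c. c = 0) (drop i w));
             b = length (takeWhile (\<lambda>c. c = 1) (drop (i + a) w))
         in q * a > b))"

definition binary_words :: "nat \<Rightarrow> nat list set" where
  "binary_words n = {w. length w = n \<and> set w \<subseteq> {0, 1}}"

definition num_q_decreasing :: "nat \<Rightarrow> nat \<Rightarrow> nat" where
  "num_q_decreasing q n = card {w \<in> binary_words n. q_decreasing q w}"

end

theory Submission
  imports Defs
begin

text \<open>A word is q-decreasing iff a left-to-right scan that remembers only the last block
  0^a 1^b read so far never lets b reach q a. Classifying the accepted words by the final state of
  the scan, appending a letter gives f(n+1) = 2 f(n) - h(n), where h(n) counts the accepted words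
  ending in a saturated block 0^a 1^(q a - 1). Such a word is an accepted word not ending in 0
  followed by that block, and the accepted words not ending in 0 have generating function
  (1 - x) F(x); hence H(x) (1 - x^(q+1)) = x^q (1 - x) F(x), and eliminating H gives the formula.\<close>

section \<open>Runs of zeros and ones\<close>

definition run_length :: "nat \<Rightarrow> nat list \<Rightarrow> nat" where
  "run_length c w = length (takeWhile (\<lambda>x. x = c) w)"

definition leading_block_ok :: "nat \<Rightarrow> nat list \<Rightarrow> bool" where
  "leading_block_ok q v \<longleftrightarrow> run_length 1 (drop (run_length 0 v) v) < q * run_length 0 v"

definition zero_run_start :: "nat list \<Rightarrow> nat \<Rightarrow> bool" where
  "zero_run_start w i \<longleftrightarrow> w ! i = 0 \<and> (i = 0 \<or> w ! (i - 1) = 1)"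

lemma q_decreasing_iff_leading_block_ok:
  "q_decreasing q w \<longleftrightarrow> (\<forall>i<length w. zero_run_start w i \<longrightarrow> leading_block_ok q (drop i w))"
  by (simp add: q_decreasing_def leading_block_ok_def run_length_def zero_run_start_def Let_def add.commute)

lemma zero_run_start_append:
  assumes "last x = 1" "x \<noteq> []"
  shows "zero_run_start (x @ y) (length x + j) \<longleftrightarrow> zero_run_start y j"
  using assms by (cases j) (auto simp: zero_run_start_def nth_append last_conv_nth)

lemma q_decreasing_append:
  assumes "last x = 1" "x \<noteq> []"
  shows "q_decreasing q (x @ y) \<longleftrightarrow>
    (\<forall>i<length x. zero_run_start (x @ y) i \<longrightarrow> leading_block_ok q (drop i (x @ y))) \<and> q_decreasing q y"
proof -
  have all_less_add: "(\<forall>i<length x + length y. P i) \<longleftrightarrow> (\<forall>i<length x. P i) \<and> (\<forall>j<length y. P (length x + j))"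
    for P :: "nat \<Rightarrow> bool"
  proof
    assume "(\<forall>i<length x. P i) \<and> (\<forall>j<length y. P (length x + j))"
    then show "\<forall>i<length x + length y. P i"
      by (metis add_diff_inverse_nat add_less_cancel_left)
  qed auto
  show ?thesis
    unfolding q_decreasing_iff_leading_block_ok length_append all_less_add
    by (simp add: zero_run_start_append[OF assms])
qed

lemma q_decreasing_Cons_one: "q_decreasing q (1 # w) \<longleftrightarrow> q_decreasing q w"
  using q_decreasing_append[of "[1]" q w] by (simp add: zero_run_start_def)

lemma q_decreasing_block_append:
  assumes "a \<ge> 1" "b \<ge> 1"
  shows "q_decreasing q (replicate a 0 @ replicate b 1 @ y) \<longleftrightarrow>
    b + run_length 1 y < q * a \<and> q_decreasing q y"
proof -
  let ?x = "replicate a 0 @ replicate b (1::nat)"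
  have starts: "zero_run_start (?x @ y) i \<longleftrightarrow> i = 0" if "i < a + b" for i
    using assms that by (auto simp: zero_run_start_def nth_append)
  have "leading_block_ok q (?x @ y) \<longleftrightarrow> b + run_length 1 y < q * a"
    using assms by (simp add: leading_block_ok_def run_length_def takeWhile_append)
  then show ?thesis
    using q_decreasing_append[of ?x q y] assms starts by auto
qed

lemma q_decreasing_replicate_zero:
  assumes "a \<ge> 1" "q \<ge> 1"
  shows "q_decreasing q (replicate a 0)"
  using assms by (auto simp: q_decreasing_iff_leading_block_ok zero_run_start_def leading_block_ok_def run_length_def)

section \<open>Scanning a word block by block\<close>

text \<open>State \<open>Ones\<close>: no \<open>0\<close> read yet; state \<open>Block a b\<close>: the word read so far ends with the maximal
  block 0^a 1^b.\<close>

datatype scan_state = Ones | Block nat nat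

fun scan_step :: "nat \<Rightarrow> scan_state \<Rightarrow> nat \<Rightarrow> scan_state option" where
  "scan_step q Ones c = (if c = 0 then Some (Block 1 0) else Some Ones)"
| "scan_step q (Block a b) c =
    (if c = 0 then Some (if b = 0 then Block (Suc a) 0 else Block 1 0)
     else if Suc b < q * a then Some (Block a (Suc b)) else None)"

fun scan :: "nat \<Rightarrow> scan_state \<Rightarrow> nat list \<Rightarrow> scan_state option" where
  "scan q s [] = Some s"
| "scan q s (c # w) = Option.bind (scan_step q s c) (\<lambda>t. scan q t w)"

lemma scan_snoc: "scan q s (w @ [c]) = Option.bind (scan q s w) (\<lambda>t. scan_step q t c)"
  by (induction w arbitrary: s) (auto split: Option.bind_split)

fun block_word :: "scan_state \<Rightarrow> nat list" where
  "block_word Ones = []"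
| "block_word (Block a b) = replicate a 0 @ replicate b 1"

fun admissible :: "nat \<Rightarrow> scan_state \<Rightarrow> bool" where
  "admissible q Ones = True"
| "admissible q (Block a b) \<longleftrightarrow> 1 \<le> a \<and> b < q * a"

lemma scan_admissible:
  assumes "q \<ge> 1" "admissible q s" "scan q s w = Some t"
  shows "admissible q t"
  using assms(2,3)
proof (induction w arbitrary: s)
  case (Cons c w)
  then obtain s' where "scan_step q s c = Some s'" "scan q s' w = Some t"
    by (auto split: Option.bind_splits)
  moreover from this(1) have "admissible q s'"
    using Cons.prems(1) assms(1) by (cases s) (auto split: if_splits)
  ultimately show ?case using Cons.IH by blast
qed simp

lemma scan_length_block_word:
  "scan q s w = Some t \<Longrightarrow> length (block_word t) \<le> length (block_word s) + length w"
proof (induction w arbitrary: s)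
  case (Cons c w)
  then obtain s' where s': "scan_step q s c = Some s'" "scan q s' w = Some t"
    by (auto split: Option.bind_splits)
  have "length (block_word s') \<le> length (block_word s) + 1"
    using s'(1) by (cases s) (auto split: if_splits)
  then show ?case using Cons.IH[OF s'(2)] by simp
qed simp

lemma q_decreasing_block_word:
  assumes "q \<ge> 1" "admissible q s"
  shows "q_decreasing q (block_word s)"
proof (cases s)
  case (Block a b)
  then show ?thesis
    using assms q_decreasing_replicate_zero[of a q] q_decreasing_block_append[of a b q "[]"]
    by (cases "b = 0") (auto simp: run_length_def q_decreasing_def)
qed (simp add: q_decreasing_def)

lemma q_decreasing_block_word_Cons:
  assumes "admissible q s" "c \<in> {0, 1}"
  shows "q_decreasing q (block_word s @ c # w) \<longleftrightarrow>
    (case scan_step q s c of None \<Rightarrow> False | Some t \<Rightarrow> q_decreasing q (block_word t @ w))"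
proof (cases s)
  case Ones
  then show ?thesis using assms(2) q_decreasing_Cons_one by auto
next
  case (Block a b)
  consider "c = 0" "b = 0" | "c = 0" "b \<ge> 1" | "c = 1"
    using assms(2) by fastforce
  then show ?thesis
  proof cases
    case 1
    then show ?thesis using Block by (simp add: replicate_app_Cons_same)
  next
    case 2
    then show ?thesis
      using Block assms(1) q_decreasing_block_append[of a b q "0 # w"] by (simp add: run_length_def)
  next
    case 3
    have word: "block_word s @ c # w = replicate a 0 @ replicate (Suc b) 1 @ w"
      using Block 3 by (simp add: replicate_app_Cons_same)
    show ?thesis
    proof (cases "Suc b < q * a")
      case False
      then show ?thesis
        using Block assms(1) 3 q_decreasing_block_append[of a "Suc b" q w]
        by (simp add: replicate_app_Cons_same)
    qed (use Block 3 word in \<open>simp add: replicate_app_Cons_same\<close>)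
  qed
qed

theorem q_decreasing_iff_scan:
  assumes "q \<ge> 1" "admissible q s" "set w \<subseteq> {0, 1}"
  shows "q_decreasing q (block_word s @ w) \<longleftrightarrow> scan q s w \<noteq> None"
  using assms(2,3)
proof (induction w arbitrary: s)
  case Nil
  then show ?case using q_decreasing_block_word[OF assms(1)] by simp
next
  case (Cons c w)
  show ?case
  proof (cases "scan_step q s c")
    case (Some t)
    have "admissible q t" using scan_admissible[OF assms(1) Cons.prems(1), of "[c]"] Some by simp
    then show ?thesis
      using Cons q_decreasing_block_word_Cons[OF Cons.prems(1), of c w] Some by simp
  qed (use Cons.prems q_decreasing_block_word_Cons in auto)
qed

section \<open>Counting words by the final state of the scan\<close>

lemma finite_binary_words: "finite (binary_words n)"
proof -
  have "binary_words n = {w. set w \<subseteq> {0, 1} \<and> length w = n}"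
    by (auto simp: binary_words_def)
  then show ?thesis using finite_lists_length_eq[of "{0::nat, 1}" n] by simp
qed

lemma binary_words_Suc:
  "binary_words (Suc n) = (\<lambda>w. w @ [0]) ` binary_words n \<union> (\<lambda>w. w @ [1]) ` binary_words n"
proof (intro equalityI subsetI)
  fix w assume w: "w \<in> binary_words (Suc n)"
  then obtain v c where "w = v @ [c]" by (cases w rule: rev_cases) (auto simp: binary_words_def)
  with w show "w \<in> (\<lambda>w. w @ [0]) ` binary_words n \<union> (\<lambda>w. w @ [1]) ` binary_words n"
    by (auto simp: binary_words_def)
qed (auto simp: binary_words_def)

lemma card_binary_words_Suc:
  "card {w \<in> binary_words (Suc n). P w} =
    card {w \<in> binary_words n. P (w @ [0])} + card {w \<in> binary_words n. P (w @ [1])}"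
proof -
  have "{w \<in> binary_words (Suc n). P w} =
      (\<lambda>w. w @ [0]) ` {w \<in> binary_words n. P (w @ [0])} \<union> (\<lambda>w. w @ [1]) ` {w \<in> binary_words n. P (w @ [1])}"
    (is "_ = ?A0 \<union> ?A1")
    unfolding binary_words_Suc by blast
  moreover have "inj_on (\<lambda>w. w @ [c]) A" for c :: nat and A
    by (simp add: inj_on_def)
  moreover have "?A0 \<inter> ?A1 = {}"
    by auto
  ultimately show ?thesis
    by (simp add: card_Un_disjoint finite_binary_words card_image)
qed

definition num_reaching :: "nat \<Rightarrow> nat \<Rightarrow> (scan_state \<Rightarrow> bool) \<Rightarrow> nat" where
  "num_reaching q n P = card {w \<in> binary_words n. \<exists>s. scan q Ones w = Some s \<and> P s}"

lemma num_reaching_0: "num_reaching q 0 P = (if P Ones then 1 else 0)"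
proof -
  have "{w \<in> binary_words 0. \<exists>s. scan q Ones w = Some s \<and> P s} = (if P Ones then {[]} else {})"
    by (auto simp: binary_words_def)
  then show ?thesis by (simp add: num_reaching_def)
qed

lemma num_reaching_eq_0: "(\<And>s. \<not> P s) \<Longrightarrow> num_reaching q n P = 0"
  by (simp add: num_reaching_def)

lemma num_reaching_Suc:
  "num_reaching q (Suc n) P =
    num_reaching q n (\<lambda>s. \<exists>t. scan_step q s 0 = Some t \<and> P t) +
    num_reaching q n (\<lambda>s. \<exists>t. scan_step q s 1 = Some t \<and> P t)"
proof -
  have "(\<exists>t. Option.bind x f = Some t \<and> P t) \<longleftrightarrow> (\<exists>s. x = Some s \<and> (\<exists>t. f s = Some t \<and> P t))"
    for x :: "scan_state option" and f
    by (cases x) auto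
  then show ?thesis
    unfolding num_reaching_def card_binary_words_Suc scan_snoc by presburger
qed

lemma num_reaching_cong:
  assumes "q \<ge> 1" "\<And>s. admissible q s \<Longrightarrow> P s \<longleftrightarrow> Q s"
  shows "num_reaching q n P = num_reaching q n Q"
proof -
  have "scan q Ones w = Some s \<Longrightarrow> P s \<longleftrightarrow> Q s" for w s
    using scan_admissible[OF assms(1), of Ones w s] assms(2) by simp
  then show ?thesis unfolding num_reaching_def by metis
qed

lemma num_reaching_split:
  "num_reaching q n P = num_reaching q n (\<lambda>s. P s \<and> Q s) + num_reaching q n (\<lambda>s. P s \<and> \<not> Q s)"
proof -
  have "{w \<in> binary_words n. \<exists>s. scan q Ones w = Some s \<and> P s} =
      {w \<in> binary_words n. \<exists>s. scan q Ones w = Some s \<and> P s \<and> Q s} \<union>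
      {w \<in> binary_words n. \<exists>s. scan q Ones w = Some s \<and> P s \<and> \<not> Q s}"
    by blast
  then show ?thesis
    unfolding num_reaching_def by (subst card_Un_disjoint[symmetric]) (auto simp: finite_binary_words)
qed

lemma num_reaching_sum:
  assumes "q \<ge> 1" "finite S"
    and "\<And>s. admissible q s \<Longrightarrow> length (block_word s) \<le> n \<Longrightarrow> P s \<longleftrightarrow> s \<in> S"
  shows "num_reaching q n P = (\<Sum>s\<in>S. num_reaching q n (\<lambda>t. t = s))"
proof -
  have "{w \<in> binary_words n. \<exists>t. scan q Ones w = Some t \<and> P t} =
      (\<Union>s\<in>S. {w \<in> binary_words n. \<exists>t. scan q Ones w = Some t \<and> t = s})"
  proof -
    have "P t \<longleftrightarrow> t \<in> S" if "w \<in> binary_words n" "scan q Ones w = Some t" for w t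
      using that scan_admissible[OF assms(1), of Ones w t] scan_length_block_word[of q Ones w t] assms(3)
      by (simp add: binary_words_def)
    then show ?thesis by blast
  qed
  then show ?thesis
    unfolding num_reaching_def
    by (subst card_UN_disjoint[symmetric]) (auto simp: assms(2) finite_binary_words)
qed

fun ends_in_zero :: "scan_state \<Rightarrow> bool" where
  "ends_in_zero Ones = False"
| "ends_in_zero (Block a b) \<longleftrightarrow> b = 0"

fun saturated :: "nat \<Rightarrow> scan_state \<Rightarrow> bool" where
  "saturated q Ones = False"
| "saturated q (Block a b) \<longleftrightarrow> q * a \<le> Suc b"

definition num_accepted :: "nat \<Rightarrow> nat \<Rightarrow> nat" where
  "num_accepted q n = num_reaching q n (\<lambda>_. True)"

definition num_not_ending_in_zero :: "nat \<Rightarrow> nat \<Rightarrow> nat" where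
  "num_not_ending_in_zero q n = num_reaching q n (\<lambda>s. \<not> ends_in_zero s)"

definition num_saturated :: "nat \<Rightarrow> nat \<Rightarrow> nat" where
  "num_saturated q n = num_reaching q n (saturated q)"

lemma num_q_decreasing_eq_num_accepted:
  assumes "q \<ge> 1"
  shows "num_q_decreasing q n = num_accepted q n"
proof -
  have "{w \<in> binary_words n. q_decreasing q w} = {w \<in> binary_words n. \<exists>s. scan q Ones w = Some s}"
    using q_decreasing_iff_scan[OF assms, of Ones] by (auto simp: binary_words_def)
  then show ?thesis by (simp add: num_q_decreasing_def num_accepted_def num_reaching_def)
qed

lemma num_accepted_0: "num_accepted q 0 = 1"
  by (simp add: num_accepted_def num_reaching_0)

lemma num_accepted_Suc: "num_accepted q (Suc n) + num_saturated q n = 2 * num_accepted q n"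
proof -
  have "scan_step q s 1 \<noteq> None \<longleftrightarrow> \<not> saturated q s" for s
    by (cases s) auto
  moreover have "scan_step q s 0 \<noteq> None" for s
    by (cases s) auto
  ultimately have "num_accepted q (Suc n) = num_accepted q n + num_reaching q n (\<lambda>s. \<not> saturated q s)"
    by (simp add: num_accepted_def num_reaching_Suc)
  moreover have "num_accepted q n = num_reaching q n (\<lambda>s. \<not> saturated q s) + num_saturated q n"
    using num_reaching_split[of q n "\<lambda>_. True" "\<lambda>s. \<not> saturated q s"]
    by (simp add: num_accepted_def num_saturated_def)
  ultimately show ?thesis by simp
qed

lemma num_not_ending_in_zero_0: "num_not_ending_in_zero q 0 = 1"
  by (simp add: num_not_ending_in_zero_def num_reaching_0)

lemma num_accepted_Suc_eq_num_not_ending_in_zero: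
  "num_accepted q (Suc n) = num_not_ending_in_zero q (Suc n) + num_accepted q n"
proof -
  have "\<exists>t. scan_step q s 0 = Some t \<and> ends_in_zero t" for s
    by (cases s) auto
  moreover have "\<not> (\<exists>t. scan_step q s 1 = Some t \<and> ends_in_zero t)" for s
    by (cases s) auto
  ultimately have "num_reaching q (Suc n) ends_in_zero = num_accepted q n"
    by (simp add: num_reaching_Suc num_accepted_def num_reaching_eq_0)
  then show ?thesis
    using num_reaching_split[of q "Suc n" "\<lambda>_. True" ends_in_zero]
    by (simp add: num_accepted_def num_not_ending_in_zero_def)
qed

text \<open>A word scanned to \<open>Block a b\<close> is a word not ending in \<open>0\<close> followed by 0^a 1^b.\<close>

lemma num_reaching_Block:
  assumes "q \<ge> 1" "admissible q (Block a b)"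
  shows "num_reaching q n (\<lambda>s. s = Block a b) =
    (if a + b \<le> n then num_not_ending_in_zero q (n - (a + b)) else 0)"
  using assms(2)
proof (induction n arbitrary: a b)
  case 0
  then show ?case by (simp add: num_reaching_0)
next
  case (Suc n)
  show ?case
  proof (cases b)
    case (Suc b')
    have "(\<exists>t. scan_step q s 1 = Some t \<and> t = Block a b) \<longleftrightarrow> s = Block a b'" for s
      using Suc.prems Suc by (cases s) auto
    moreover have no_zero: "\<not> (\<exists>t. scan_step q s 0 = Some t \<and> t = Block a b)" for s
      using Suc by (cases s) auto
    ultimately show ?thesis
      using Suc.IH[of a b'] Suc.prems Suc num_reaching_eq_0[OF no_zero] by (simp add: num_reaching_Suc)
  next
    case 0
    then obtain a' where a: "a = Suc a'" using Suc.prems by (cases a) auto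
    have no_one: "\<not> (\<exists>t. scan_step q s 1 = Some t \<and> t = Block a b)" for s
      using 0 by (cases s) (auto split: if_splits)
    show ?thesis
    proof (cases "a' = 0")
      case True
      have "(\<exists>t. scan_step q s 0 = Some t \<and> t = Block a b) \<longleftrightarrow> \<not> ends_in_zero s"
        if "admissible q s" for s
        using that True a 0 by (cases s) auto
      then have "num_reaching q n (\<lambda>s. \<exists>t. scan_step q s 0 = Some t \<and> t = Block a b) =
          num_not_ending_in_zero q n"
        unfolding num_not_ending_in_zero_def by (rule num_reaching_cong[OF assms(1)])
      then show ?thesis
        using num_reaching_eq_0[OF no_one] True a 0 by (simp add: num_reaching_Suc)
    next
      case False
      have "(\<exists>t. scan_step q s 0 = Some t \<and> t = Block a b) \<longleftrightarrow> s = Block a' 0" for s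
        using False a 0 by (cases s) auto
      then show ?thesis
        using Suc.IH[of a' 0] num_reaching_eq_0[OF no_one] False a 0 assms(1)
        by (simp add: num_reaching_Suc)
    qed
  qed
qed

lemma num_reaching_Block_Suc:
  assumes "q \<ge> 1" "admissible q (Block a b)"
  shows "num_reaching q n (\<lambda>s. s = Block (Suc a) (b + q)) =
    (if q + 1 \<le> n then num_reaching q (n - (q + 1)) (\<lambda>s. s = Block a b) else 0)"
proof -
  have "admissible q (Block (Suc a) (b + q))" using assms(2) by simp
  then have shifted: "num_reaching q n (\<lambda>s. s = Block (Suc a) (b + q)) =
      (if Suc a + (b + q) \<le> n then num_not_ending_in_zero q (n - (Suc a + (b + q))) else 0)"
    using num_reaching_Block assms(1) by blast
  show ?thesis
  proof (cases "q + 1 \<le> n")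
    case True
    then have "Suc a + (b + q) \<le> n \<longleftrightarrow> a + b \<le> n - (q + 1)"
      and "n - (Suc a + (b + q)) = n - (q + 1) - (a + b)"
      by auto
    then show ?thesis using shifted num_reaching_Block[OF assms] True by simp
  qed (use shifted in simp)
qed

lemma num_saturated_eq_sum:
  assumes "q \<ge> 1" "n \<le> m"
  shows "num_saturated q n = (\<Sum>a<m. num_reaching q n (\<lambda>s. s = Block (Suc a) (q * Suc a - 1)))"
proof -
  let ?block = "\<lambda>a. Block (Suc a) (q * Suc a - 1)"
  have "saturated q s \<longleftrightarrow> s \<in> ?block ` {..<m}"
    if "admissible q s" "length (block_word s) \<le> n" for s
  proof (cases s)
    case (Block a b)
    then show ?thesis
      using that assms by (cases a) (auto simp: image_iff)
  qed auto
  then have "num_saturated q n = (\<Sum>s\<in>?block ` {..<m}. num_reaching q n (\<lambda>t. t = s))"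
    unfolding num_saturated_def by (intro num_reaching_sum[OF assms(1)]) auto
  moreover have "inj ?block" by (simp add: inj_def)
  ultimately show ?thesis by (simp add: sum.reindex inj_on_subset)
qed

lemma num_saturated_rec:
  assumes "q \<ge> 1"
  shows "num_saturated q n =
    (if q \<le> n then num_not_ending_in_zero q (n - q) else 0) +
    (if q + 1 \<le> n then num_saturated q (n - (q + 1)) else 0)"
proof -
  let ?R = "\<lambda>n a. num_reaching q n (\<lambda>s. s = Block (Suc a) (q * Suc a - 1))"
  have shift: "?R n (Suc a) = (if q + 1 \<le> n then ?R (n - (q + 1)) a else 0)" for a
  proof -
    have "q * Suc (Suc a) - 1 = (q * Suc a - 1) + q" using assms by simp
    then show ?thesis
      using num_reaching_Block_Suc[OF assms, of "Suc a" "q * Suc a - 1" n] assms by simp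
  qed
  have "num_saturated q n = (\<Sum>a<Suc n. ?R n a)"
    using num_saturated_eq_sum[OF assms, of n "Suc n"] by simp
  also have "\<dots> = ?R n 0 + (\<Sum>a<n. ?R n (Suc a))"
    by (rule sum.lessThan_Suc_shift)
  also have "?R n 0 = (if q \<le> n then num_not_ending_in_zero q (n - q) else 0)"
    using num_reaching_Block[OF assms, of 1 "q - 1" n] assms by simp
  also have "(\<Sum>a<n. ?R n (Suc a)) = (if q + 1 \<le> n then num_saturated q (n - (q + 1)) else 0)"
    using shift num_saturated_eq_sum[OF assms, of "n - (q + 1)" n] by simp
  finally show ?thesis .
qed

section \<open>Generating functions\<close>

lemma generating_function_identity:
  fixes A H x :: "'a::comm_ring_1"
  assumes "A = 1 + x * (2 * A - H)" "H * (1 - x ^ (q + 1)) = x ^ q * (1 - x) * A"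
  shows "A * (1 - 2 * x + x ^ (q + 2)) = 1 - x ^ (q + 1)"
proof -
  have substituted: "x * (H * (1 - x ^ (q + 1))) = x ^ (q + 1) * (1 - x) * A"
    unfolding assms(2) by (simp add: ac_simps)
  have "A * (1 - x ^ (q + 1)) = (1 + x * (2 * A - H)) * (1 - x ^ (q + 1))"
    using assms(1) by simp
  also have "\<dots> = (1 - x ^ (q + 1)) + 2 * x * A * (1 - x ^ (q + 1)) - x * (H * (1 - x ^ (q + 1)))"
    by (simp add: algebra_simps)
  finally have "A * (1 - x ^ (q + 1)) - 2 * x * A * (1 - x ^ (q + 1)) + x ^ (q + 1) * (1 - x) * A =
      1 - x ^ (q + 1)"
    unfolding substituted by (simp add: algebra_simps)
  then show ?thesis by (simp add: algebra_simps)
qed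

unbundle fps_syntax

definition counting_fps :: "(nat \<Rightarrow> nat) \<Rightarrow> 'a::comm_ring_1 fps" where
  "counting_fps f = Abs_fps (\<lambda>n. of_nat (f n))"

lemma counting_fps_num_accepted:
  "(counting_fps (num_accepted q) :: 'a::comm_ring_1 fps) =
    1 + fps_X * (2 * counting_fps (num_accepted q) - counting_fps (num_saturated q))"
  (is "?A = ?R")
proof (rule fps_ext)
  fix n
  show "?A $ n = ?R $ n"
  proof (cases n)
    case (Suc m)
    have "of_nat (num_accepted q (Suc m)) =
        (2 * of_nat (num_accepted q m) - of_nat (num_saturated q m) :: 'a)"
      using arg_cong[OF num_accepted_Suc[of q m], of of_nat] by (simp add: algebra_simps)
    then show ?thesis
      using Suc by (simp add: counting_fps_def numeral_fps_const)
  qed (simp add: counting_fps_def num_accepted_0)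
qed

lemma counting_fps_num_not_ending_in_zero:
  "counting_fps (num_not_ending_in_zero q) = (1 - fps_X) * counting_fps (num_accepted q)"
proof (rule fps_ext)
  fix n
  show "counting_fps (num_not_ending_in_zero q) $ n = ((1 - fps_X) * counting_fps (num_accepted q)) $ n"
    by (cases n) (simp_all add: counting_fps_def algebra_simps num_accepted_Suc_eq_num_not_ending_in_zero
        num_not_ending_in_zero_0 num_accepted_0)
qed

lemma counting_fps_num_saturated:
  assumes "q \<ge> 1"
  shows "counting_fps (num_saturated q) * (1 - fps_X ^ (q + 1)) =
    fps_X ^ q * counting_fps (num_not_ending_in_zero q)"
  (is "?H * _ = fps_X ^ q * ?E")
proof -
  have rec: "?H = fps_X ^ q * ?E + fps_X ^ (q + 1) * ?H"
  proof (rule fps_ext)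
    fix n
    show "?H $ n = (fps_X ^ q * ?E + fps_X ^ (q + 1) * ?H) $ n"
      using num_saturated_rec[OF assms, of n]
      by (simp only: fps_add_nth fps_X_power_mult_nth) (simp add: counting_fps_def)
  qed
  have "?H * (1 - fps_X ^ (q + 1)) = ?H - fps_X ^ (q + 1) * ?H"
    by (simp add: algebra_simps)
  also have "\<dots> = fps_X ^ q * ?E"
    using rec by (metis add_diff_cancel_right')
  finally show ?thesis .
qed

theorem corollary2:
  fixes q :: nat
  assumes "q \<ge> 1"
  shows "(Abs_fps (\<lambda>n. of_nat (num_q_decreasing q n)) :: rat fps)
           = (1 - fps_X ^ (q + 1)) / (1 - 2 * fps_X + fps_X ^ (q + 2))"
proof -
  let ?A = "counting_fps (num_accepted q) :: rat fps"
  have lhs: "Abs_fps (\<lambda>n. of_nat (num_q_decreasing q n)) = ?A"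
    by (simp add: counting_fps_def num_q_decreasing_eq_num_accepted[OF assms])
  have "?A * (1 - 2 * fps_X + fps_X ^ (q + 2)) = 1 - fps_X ^ (q + 1)"
    using counting_fps_num_accepted counting_fps_num_saturated[OF assms]
    by (intro generating_function_identity) (simp_all add: counting_fps_num_not_ending_in_zero mult.assoc)
  moreover have "(1 - 2 * fps_X + fps_X ^ (q + 2) :: rat fps) \<noteq> 0"
  proof -
    have "(1 - 2 * fps_X + fps_X ^ (q + 2) :: rat fps) $ 0 \<noteq> 0" by simp
    then show ?thesis by (metis fps_zero_nth)
  qed
  ultimately show ?thesis
    unfolding lhs by (metis fps_divide_times_eq)
qed

end
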